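(* A partial function $f$ on $\{0,1\}^n$ is not submodular-extendable if and only if $f$ contains a path certificate.
   Context: Identify $\{0,1\}^n$ with subsets of $[n]$; the hypercube graph has edges $(S,S+i)$ for $i\notin S$. A partial function $f$ is a real-valued function on a subset $\mathcal{D}=\mathrm{D}(f)\subseteq\{0,1\}^n$; it is submodular-extendable if some submodular $g:2^{[n]}\to\mathbb{R}$ (i.e. $g(S+i)-g(S)\ge g(T+i)-g(T)$ whenever $S\subseteq T$, $i\notin T$) agrees with $f$ on $\mathcal{D}$. For hypercube edges $e=(S,S+i)$ and $e'=(T,T+j)$ write $e\preceq e'$ if $i=j$ and $S\subseteq T$. Consider a finite collection $\mathbf{P}$ of directed paths in the hypercube graph, each being either a directed cycle or a directed path whose two endpoints lie in $\mathcal{D}$. A traversed edge is upward if it is traversed from the smaller set to the larger and downward otherwise. Let $\mathbf{U}$ (resp. $\mathbf{D}$) be the multiset of upward (resp. downward) edge traversals in $\mathbf{P}$, counted with multiplicity. $\mathbf{P}$ is matched if there is a perfect matching between $\mathbf{U}$ and $\mathbf{D}$ in which each upward edge $e$ is matched to a downward edge $e'$ with $e\preceq e'$. The value of a path from $S\in\mathcal{D}$ to $S'\in\mathcal{D}$ is $f(S')-f(S)$, cycles have value $0$, and the value of $\mathbf{P}$ is the sum of the values of its members. A path certificate for $f$ is a matched collection $\mathbf{P}$ of negative value. *)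

theory Defs
  imports Complex_Main "HOL-Library.Multiset"
begin

text \<open>Vertices of the hypercube {0,1}^n are subsets of {0..<n} (i.e. of [n], 0-indexed).
A partial function is a pair (D, f) with D a set of vertices and f :: nat set => real,
only the values of f on D being relevant.\<close>

definition submodular_on :: "nat \<Rightarrow> (nat set \<Rightarrow> real) \<Rightarrow> bool" where
  "submodular_on n g \<longleftrightarrow>
     (\<forall>S T i. S \<subseteq> T \<and> T \<subseteq> {..<n} \<and> i < n \<and> i \<notin> T \<longrightarrow>
        g (insert i S) - g S \<ge> g (insert i T) - g T)"

definition submodular_extendable :: "nat \<Rightarrow> nat set set \<Rightarrow> (nat set \<Rightarrow> real) \<Rightarrow> bool" where
  "submodular_extendable n D f \<longleftrightarrow>
     (\<exists>g. submodular_on n g \<and> (\<forall>S\<in>D. g S = f S))"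

text \<open>Hypercube edges (S, S+i), i notin S, are represented as pairs (lower set, upper set).\<close>

definition hc_adj :: "nat \<Rightarrow> nat set \<Rightarrow> nat set \<Rightarrow> bool" where
  "hc_adj n u v \<longleftrightarrow> u \<subseteq> {..<n} \<and> v \<subseteq> {..<n} \<and>
     (\<exists>i<n. (i \<notin> u \<and> v = insert i u) \<or> (i \<notin> v \<and> u = insert i v))"

definition hc_walk :: "nat \<Rightarrow> nat set list \<Rightarrow> bool" where
  "hc_walk n p \<longleftrightarrow> p \<noteq> [] \<and> set p \<subseteq> Pow {..<n} \<and>
     (\<forall>k. Suc k < length p \<longrightarrow> hc_adj n (p ! k) (p ! Suc k))"

definition admissible_path :: "nat \<Rightarrow> nat set set \<Rightarrow> nat set list \<Rightarrow> bool" where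
  "admissible_path n D p \<longleftrightarrow> hc_walk n p \<and>
     (hd p = last p \<or> (hd p \<in> D \<and> last p \<in> D))"

definition steps :: "'a list \<Rightarrow> ('a \<times> 'a) multiset" where
  "steps p = mset (zip p (tl p))"

definition up_edges :: "nat set list \<Rightarrow> (nat set \<times> nat set) multiset" where
  "up_edges p = filter_mset (\<lambda>(u, v). u \<subset> v) (steps p)"

definition down_edges :: "nat set list \<Rightarrow> (nat set \<times> nat set) multiset" where
  "down_edges p = image_mset (\<lambda>(u, v). (v, u)) (filter_mset (\<lambda>(u, v). v \<subset> u) (steps p))"

definition edge_le :: "nat set \<times> nat set \<Rightarrow> nat set \<times> nat set \<Rightarrow> bool" where
  "edge_le e e' \<longleftrightarrow> snd e - fst e = snd e' - fst e' \<and> fst e \<subseteq> fst e'"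

definition all_up :: "nat set list list \<Rightarrow> (nat set \<times> nat set) multiset" where
  "all_up P = sum_list (map up_edges P)"

definition all_down :: "nat set list list \<Rightarrow> (nat set \<times> nat set) multiset" where
  "all_down P = sum_list (map down_edges P)"

definition matched :: "nat set list list \<Rightarrow> bool" where
  "matched P \<longleftrightarrow> (\<exists>M :: ((nat set \<times> nat set) \<times> (nat set \<times> nat set)) multiset.
     image_mset fst M = all_up P \<and> image_mset snd M = all_down P \<and>
     (\<forall>x\<in>#M. edge_le (fst x) (snd x)))"

definition path_value :: "(nat set \<Rightarrow> real) \<Rightarrow> nat set list \<Rightarrow> real" where
  "path_value f p = (if hd p = last p then 0 else f (last p) - f (hd p))"

definition coll_value :: "(nat set \<Rightarrow> real) \<Rightarrow> nat set list list \<Rightarrow> real" where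
  "coll_value f P = (\<Sum>p\<leftarrow>P. path_value f p)"

text \<open>A finite collection (with multiplicity) of admissible paths: a list.\<close>
definition path_certificate :: "nat \<Rightarrow> nat set set \<Rightarrow> (nat set \<Rightarrow> real) \<Rightarrow> nat set list list \<Rightarrow> bool" where
  "path_certificate n D f P \<longleftrightarrow> (\<forall>p\<in>set P. admissible_path n D p) \<and> matched P \<and>
     coll_value f P < 0"

end

theory Submission
  imports Defs
begin

text \<open>A submodular extension of \<open>f\<close> is a solution of a finite system of linear inequalities
  indexed by the vertices of the cube. Along a path certificate, an extension telescopes, and
  matching each upward edge with a downward one that dominates it shows, by submodularity,
  that the value of the certificate is non-negative.

  Conversely, if the system is infeasible, Fourier--Motzkin elimination, carried out with integer
  multipliers only, produces a non-negative integer combination of the inequalities whose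
  left-hand sides cancel and whose right-hand side is negative. Each submodularity inequality
  \<open>S \<subseteq> T\<close>, \<open>i\<close> in the combination contributes the upward edge \<open>(S, S+i)\<close> and the downward
  traversal of \<open>(T, T+i)\<close>, matched to each other. Cancellation of the coefficients says that this
  multiset of traversals is balanced outside \<open>D\<close>, so it splits into closed walks and walks between
  points of \<open>D\<close>, and its value is the negative right-hand side.\<close>

section \<open>Integer Fourier--Motzkin elimination\<close>

text \<open>Combinations of constraints are multisets of indices, so all
  multipliers produced by the elimination are natural numbers.\<close>

definition comb_coeff :: "('c \<Rightarrow> 'v \<Rightarrow> int) \<Rightarrow> 'c multiset \<Rightarrow> 'v \<Rightarrow> int" where
  "comb_coeff A z v = (\<Sum>c\<in>#z. A c v)"

definition comb_rhs :: "('c \<Rightarrow> real) \<Rightarrow> 'c multiset \<Rightarrow> real" where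
  "comb_rhs B z = (\<Sum>c\<in>#z. B c)"

definition comb_lhs :: "('c \<Rightarrow> 'v \<Rightarrow> int) \<Rightarrow> 'v set \<Rightarrow> 'c multiset \<Rightarrow> ('v \<Rightarrow> real) \<Rightarrow> real" where
  "comb_lhs A V z x = (\<Sum>v\<in>V. of_int (comb_coeff A z v) * x v)"

definition lp_solution ::
    "('c \<Rightarrow> 'v \<Rightarrow> int) \<Rightarrow> ('c \<Rightarrow> real) \<Rightarrow> 'v set \<Rightarrow> 'c multiset set \<Rightarrow> ('v \<Rightarrow> real) \<Rightarrow> bool" where
  "lp_solution A B V Y x \<longleftrightarrow> (\<forall>y\<in>Y. comb_lhs A V y x \<le> comb_rhs B y)"

lemma comb_coeff_add [simp]: "comb_coeff A (y + z) v = comb_coeff A y v + comb_coeff A z v"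
  by (simp add: comb_coeff_def)

lemma comb_coeff_repeat [simp]: "comb_coeff A (repeat_mset k y) v = int k * comb_coeff A y v"
  by (induction k) (simp_all add: comb_coeff_def algebra_simps)

lemma comb_rhs_add [simp]: "comb_rhs B (y + z) = comb_rhs B y + comb_rhs B z"
  by (simp add: comb_rhs_def)

lemma comb_rhs_repeat [simp]: "comb_rhs B (repeat_mset k y) = real k * comb_rhs B y"
  by (induction k) (simp_all add: comb_rhs_def algebra_simps)

lemma comb_lhs_add [simp]: "comb_lhs A V (y + z) x = comb_lhs A V y x + comb_lhs A V z x"
  by (simp add: comb_lhs_def distrib_right sum.distrib)

lemma comb_lhs_repeat [simp]: "comb_lhs A V (repeat_mset k y) x = real k * comb_lhs A V y x"
  by (simp add: comb_lhs_def sum_distrib_left mult.assoc)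

lemma comb_lhs_insert:
  "finite V \<Longrightarrow> w \<notin> V \<Longrightarrow>
     comb_lhs A (insert w V) y (x(w := t)) = of_int (comb_coeff A y w) * t + comb_lhs A V y x"
  unfolding comb_lhs_def by (auto intro!: sum.cong)

lemma comb_lhs_eq_sum:
  "comb_lhs A V z x = (\<Sum>c\<in>#z. \<Sum>v\<in>V. of_int (A c v) * x v)"
  by (induction z) (simp_all add: comb_lhs_def comb_coeff_def sum.distrib distrib_right)

lemma real_between_finite_bounds:
  fixes L U :: "real set"
  assumes "finite L" "finite U" "\<And>l u. l \<in> L \<Longrightarrow> u \<in> U \<Longrightarrow> l \<le> u"
  obtains t where "\<And>l. l \<in> L \<Longrightarrow> l \<le> t" "\<And>u. u \<in> U \<Longrightarrow> t \<le> u"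
proof (cases "L = {}")
  case True
  show ?thesis
    by (rule that[of "if U = {} then 0 else Min U"]) (use True assms(2) in auto)
next
  case False
  show ?thesis
    by (rule that[of "Max L"]) (use False assms in auto)
qed

definition fm_combine :: "('c \<Rightarrow> 'v \<Rightarrow> int) \<Rightarrow> 'v \<Rightarrow> 'c multiset \<Rightarrow> 'c multiset \<Rightarrow> 'c multiset" where
  "fm_combine A w p q =
     repeat_mset (nat (- comb_coeff A q w)) p + repeat_mset (nat (comb_coeff A p w)) q"

definition fm_eliminate :: "('c \<Rightarrow> 'v \<Rightarrow> int) \<Rightarrow> 'v \<Rightarrow> 'c multiset set \<Rightarrow> 'c multiset set" where
  "fm_eliminate A w Y = {y \<in> Y. comb_coeff A y w = 0} \<union>
     (\<lambda>(p, q). fm_combine A w p q) ` ({p \<in> Y. comb_coeff A p w > 0} \<times> {q \<in> Y. comb_coeff A q w < 0})"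

context
  fixes A :: "'c \<Rightarrow> 'v \<Rightarrow> int" and w :: 'v and p q :: "'c multiset"
  assumes pos: "comb_coeff A p w > 0" and neg: "comb_coeff A q w < 0"
begin

lemma comb_coeff_fm_combine:
  "comb_coeff A (fm_combine A w p q) v =
     - comb_coeff A q w * comb_coeff A p v + comb_coeff A p w * comb_coeff A q v"
  using pos neg by (simp add: fm_combine_def)

lemma comb_rhs_fm_combine:
  "comb_rhs B (fm_combine A w p q) =
     of_int (- comb_coeff A q w) * comb_rhs B p + of_int (comb_coeff A p w) * comb_rhs B q"
  using pos neg by (simp add: fm_combine_def)

lemma comb_lhs_fm_combine:
  "comb_lhs A V (fm_combine A w p q) x =
     of_int (- comb_coeff A q w) * comb_lhs A V p x + of_int (comb_coeff A p w) * comb_lhs A V q x"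
  using pos neg by (simp add: fm_combine_def)

end

lemma finite_fm_eliminate: "finite Y \<Longrightarrow> finite (fm_eliminate A w Y)"
  by (simp add: fm_eliminate_def)

lemma fm_eliminate_coeff_zero:
  assumes "y \<in> fm_eliminate A w Y" "\<forall>y\<in>Y. \<forall>v. v \<notin> insert w V \<longrightarrow> comb_coeff A y v = 0"
    and "v \<notin> V"
  shows "comb_coeff A y v = 0"
  using assms by (cases "v = w") (auto simp: fm_eliminate_def comb_coeff_fm_combine)

lemma in_repeat_msetD: "x \<in># repeat_mset k p \<Longrightarrow> x \<in># p"
  by (metis count_eq_zero_iff count_repeat_mset mult_0_right)

lemma fm_eliminate_support:
  "\<Union> (set_mset ` fm_eliminate A w Y) \<subseteq> \<Union> (set_mset ` Y)"
  unfolding fm_eliminate_def fm_combine_def by (fastforce dest: in_repeat_msetD)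

lemma fm_bounds_compatible:
  fixes ap aq lp lq rp rq :: real
  assumes "ap > 0" "aq < 0" "(- aq) * lp + ap * lq \<le> (- aq) * rp + ap * rq"
  shows "(rq - lq) / aq \<le> (rp - lp) / ap"
proof -
  have "ap * (lq - rq) \<le> (- aq) * (rp - lp)" using assms(3) by (simp add: algebra_simps)
  then have "(lq - rq) / (- aq) \<le> (rp - lp) / ap"
    using assms(1,2) by (simp add: divide_simps mult.commute)
  then show ?thesis by (simp add: minus_divide_left)
qed

lemma fm_eliminate_lift_solution:
  assumes "finite V" "w \<notin> V" "finite Y" and sol: "lp_solution A B V (fm_eliminate A w Y) x"
  obtains t where "lp_solution A B (insert w V) Y (x(w := t))"
proof -
  define a where "a y = real_of_int (comb_coeff A y w)" for y
  define bound where "bound y = (comb_rhs B y - comb_lhs A V y x) / a y" for y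
  define Yp where "Yp = {p \<in> Y. comb_coeff A p w > 0}"
  define Yn where "Yn = {q \<in> Y. comb_coeff A q w < 0}"
  have compatible: "bound q \<le> bound p" if p: "p \<in> Yp" and q: "q \<in> Yn" for p q
  proof -
    have pos: "comb_coeff A p w > 0" and neg: "comb_coeff A q w < 0"
      using p q by (auto simp: Yp_def Yn_def)
    have "fm_combine A w p q \<in> fm_eliminate A w Y"
      using p q by (force simp: fm_eliminate_def Yp_def Yn_def)
    with sol have "comb_lhs A V (fm_combine A w p q) x \<le> comb_rhs B (fm_combine A w p q)"
      by (simp add: lp_solution_def)
    then have "(- a q) * comb_lhs A V p x + a p * comb_lhs A V q x
        \<le> (- a q) * comb_rhs B p + a p * comb_rhs B q"
      by (simp add: comb_lhs_fm_combine[OF pos neg] comb_rhs_fm_combine[OF pos neg] a_def)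
    then show ?thesis
      unfolding bound_def using pos neg by (intro fm_bounds_compatible) (simp_all add: a_def)
  qed
  obtain t where lo: "\<And>l. l \<in> bound ` Yn \<Longrightarrow> l \<le> t"
    and hi: "\<And>u. u \<in> bound ` Yp \<Longrightarrow> t \<le> u"
    by (rule real_between_finite_bounds[of "bound ` Yn" "bound ` Yp"]) (use compatible \<open>finite Y\<close> in \<open>auto simp: Yp_def Yn_def\<close>)
  have "a y * t + comb_lhs A V y x \<le> comb_rhs B y" if y: "y \<in> Y" for y
  proof (cases "comb_coeff A y w" "0::int" rule: linorder_cases)
    case less
    then have "y \<in> Yn" using y by (simp add: Yn_def)
    then have "bound y \<le> t" using lo by blast
    moreover have "a y < 0" using less by (simp add: a_def)
    ultimately have "t * a y \<le> comb_rhs B y - comb_lhs A V y x"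
      by (simp add: bound_def neg_divide_le_eq)
    then show ?thesis by (simp add: algebra_simps)
  next
    case equal
    then have "y \<in> fm_eliminate A w Y" using y by (simp add: fm_eliminate_def)
    with sol have "comb_lhs A V y x \<le> comb_rhs B y" by (simp add: lp_solution_def)
    then show ?thesis using equal by (simp add: a_def)
  next
    case greater
    then have "y \<in> Yp" using y by (simp add: Yp_def)
    then have "t \<le> bound y" using hi by blast
    moreover have "a y > 0" using greater by (simp add: a_def)
    ultimately have "t * a y \<le> comb_rhs B y - comb_lhs A V y x"
      by (simp add: bound_def pos_le_divide_eq)
    then show ?thesis by (simp add: algebra_simps)
  qed
  then show thesis
    using that[of t] by (simp add: lp_solution_def comb_lhs_insert assms(1,2) a_def)
qed

lemma fourier_motzkin:
  assumes "finite V"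
  shows "finite Y \<Longrightarrow> \<forall>y\<in>Y. \<forall>v. v \<notin> V \<longrightarrow> comb_coeff A y v = 0 \<Longrightarrow>
    \<nexists>x. lp_solution A B V Y x \<Longrightarrow>
    \<exists>z. (\<forall>v. comb_coeff A z v = 0) \<and> comb_rhs B z < 0 \<and> set_mset z \<subseteq> \<Union> (set_mset ` Y)"
  using assms
proof (induction V arbitrary: Y rule: finite_induct)
  case empty
  have "\<not> lp_solution A B {} Y (\<lambda>_. 0)" using empty.prems(3) by blast
  then obtain y where "y \<in> Y" "comb_rhs B y < 0" by (auto simp: lp_solution_def comb_lhs_def)
  then show ?case using empty.prems(2) by blast
next
  case (insert w V)
  have infeasible: "\<nexists>x. lp_solution A B V (fm_eliminate A w Y) x"
  proof
    assume "\<exists>x. lp_solution A B V (fm_eliminate A w Y) x"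
    then obtain x where "lp_solution A B V (fm_eliminate A w Y) x" ..
    then obtain t where "lp_solution A B (insert w V) Y (x(w := t))"
      by (rule fm_eliminate_lift_solution[OF insert.hyps(1,2) insert.prems(1)])
    with insert.prems(3) show False by blast
  qed
  have "\<forall>y\<in>fm_eliminate A w Y. \<forall>v. v \<notin> V \<longrightarrow> comb_coeff A y v = 0"
    using fm_eliminate_coeff_zero[OF _ insert.prems(2)] by blast
  from insert.IH[OF finite_fm_eliminate[OF insert.prems(1)] this infeasible]
  obtain z where "\<forall>v. comb_coeff A z v = 0" "comb_rhs B z < 0"
    "set_mset z \<subseteq> \<Union> (set_mset ` fm_eliminate A w Y)"
    by blast
  then show ?case using fm_eliminate_support by (meson order_trans)
qed

lemma farkas_integer_combination:
  assumes "finite V" "finite C" "\<And>c v. c \<in> C \<Longrightarrow> v \<notin> V \<Longrightarrow> A c v = 0"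
    and "\<nexists>x. \<forall>c\<in>C. (\<Sum>v\<in>V. of_int (A c v) * x v) \<le> B c"
  obtains z where "set_mset z \<subseteq> C" "\<And>v. comb_coeff A z v = 0" "comb_rhs B z < 0"
proof -
  have infeasible: "\<nexists>x. lp_solution A B V ((\<lambda>c. {#c#}) ` C) x"
    using assms(4) by (simp add: lp_solution_def comb_lhs_def comb_coeff_def comb_rhs_def)
  have "\<forall>y\<in>(\<lambda>c. {#c#}) ` C. \<forall>v. v \<notin> V \<longrightarrow> comb_coeff A y v = 0"
    using assms(3) by (simp add: comb_coeff_def)
  from fourier_motzkin[OF assms(1) finite_imageI[OF assms(2)] this infeasible]
  obtain z where "\<forall>v. comb_coeff A z v = 0" "comb_rhs B z < 0"
    "set_mset z \<subseteq> \<Union> (set_mset ` (\<lambda>c. {#c#}) ` C)"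
    by blast
  then show thesis by (intro that) auto
qed

section \<open>Decomposing edge multisets into walks\<close>

lemma steps_Nil [simp]: "steps [] = {#}"
  by (simp add: steps_def)

lemma steps_singleton [simp]: "steps [x] = {#}"
  by (simp add: steps_def)

lemma steps_Cons_Cons [simp]: "steps (x # y # r) = add_mset (x, y) (steps (y # r))"
  by (simp add: steps_def)

lemma steps_append_tl:
  "p \<noteq> [] \<Longrightarrow> q \<noteq> [] \<Longrightarrow> hd q = last p \<Longrightarrow> steps (p @ tl q) = steps p + steps q"
proof (induction p rule: induct_list012)
  case (2 x)
  then show ?case by (cases q) auto
qed simp_all

definition net_outdeg :: "('a \<times> 'a) multiset \<Rightarrow> 'a \<Rightarrow> int" where
  "net_outdeg E v = int (count (image_mset fst E) v) - int (count (image_mset snd E) v)"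

lemma net_outdeg_empty [simp]: "net_outdeg {#} v = 0"
  by (simp add: net_outdeg_def)

lemma net_outdeg_add [simp]: "net_outdeg (E + F) v = net_outdeg E v + net_outdeg F v"
  by (simp add: net_outdeg_def)

lemma net_outdeg_add_mset [simp]:
  "net_outdeg (add_mset e E) v = of_bool (v = fst e) - of_bool (v = snd e) + net_outdeg E v"
  by (simp add: net_outdeg_def)

lemma net_outdeg_sum_mset: "net_outdeg (\<Sum>x\<in>#X. F x) v = (\<Sum>x\<in>#X. net_outdeg (F x) v)"
  by (induction X) auto

lemma net_outdeg_steps:
  "p \<noteq> [] \<Longrightarrow> net_outdeg (steps p) v = of_bool (v = hd p) - of_bool (v = last p)"
  by (induction p rule: induct_list012) auto

definition walk_decomposition :: "('a \<times> 'a) multiset \<Rightarrow> 'a list multiset \<Rightarrow> bool" where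
  "walk_decomposition E P \<longleftrightarrow> (\<Sum>p\<in>#P. steps p) = E \<and> (\<forall>p\<in>#P. 2 \<le> length p)"

lemma walk_decomposition_edges: "walk_decomposition E (image_mset (\<lambda>e. [fst e, snd e]) E)"
  by (induction E) (auto simp: walk_decomposition_def)

lemma walk_decomposition_merge:
  assumes dec: "walk_decomposition E (add_mset p (add_mset q R))" and "hd q = last p"
  shows "walk_decomposition E (add_mset (p @ tl q) R)"
proof -
  have "2 \<le> length p" "2 \<le> length q" using dec by (auto simp: walk_decomposition_def)
  then have "steps (p @ tl q) = steps p + steps q"
    using \<open>hd q = last p\<close> by (intro steps_append_tl) auto
  then show ?thesis using dec by (auto simp: walk_decomposition_def add.assoc)
qed

lemma walk_decomposition_net_outdeg:
  assumes "walk_decomposition E P"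
  shows "net_outdeg E v = (\<Sum>q\<in>#P. of_bool (v = hd q) - of_bool (v = last q))"
proof -
  have "net_outdeg E v = (\<Sum>q\<in>#P. net_outdeg (steps q) v)"
    using assms by (auto simp: walk_decomposition_def net_outdeg_sum_mset)
  also have "\<dots> = (\<Sum>q\<in>#P. of_bool (v = hd q) - of_bool (v = last q))"
    using assms by (intro arg_cong[where f = sum_mset] image_mset_cong net_outdeg_steps)
      (auto simp: walk_decomposition_def)
  finally show ?thesis .
qed

lemma sum_mset_subtractf: "(\<Sum>x\<in>#M. f x - g x) = (\<Sum>x\<in>#M. f x) - (\<Sum>x\<in>#M. g x :: 'b :: ab_group_add)"
  by (induction M) simp_all

lemma ex_pos_of_sum_mset_pos:
  fixes f :: "'a \<Rightarrow> 'b :: {ordered_comm_monoid_add, linorder}"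
  assumes "0 < (\<Sum>x\<in>#M. f x)"
  obtains x where "x \<in># M" "0 < f x"
proof (rule ccontr)
  assume "\<not> thesis"
  then have "(\<Sum>x\<in>#M. f x) \<le> (\<Sum>x\<in>#M. 0)"
    using that by (intro sum_mset_mono) (metis not_le)
  with assms show False by simp
qed

lemma walk_decomposition_successor:
  assumes dec: "walk_decomposition E P" and p: "p \<in># P" "hd p \<noteq> last p"
    and balanced: "net_outdeg E (last p) = 0"
  obtains q R where "P = add_mset p (add_mset q R)" "hd q = last p"
proof -
  define R where "R = P - {#p#}"
  have P: "P = add_mset p R" using p by (simp add: R_def)
  have "0 < (\<Sum>q\<in>#R. of_bool (last p = hd q) - of_bool (last p = last q) :: int)"
    using walk_decomposition_net_outdeg[OF dec, of "last p"] p balanced by (simp add: P)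
  then obtain q where "q \<in># R" "0 < (of_bool (last p = hd q) - of_bool (last p = last q) :: int)"
    by (rule ex_pos_of_sum_mset_pos)
  then show thesis
    using that[of q "R - {#q#}"] by (auto simp: P split: if_splits)
qed

lemma walk_decomposition_predecessor:
  assumes dec: "walk_decomposition E P" and p: "p \<in># P" "hd p \<noteq> last p"
    and balanced: "net_outdeg E (hd p) = 0"
  obtains q R where "P = add_mset q (add_mset p R)" "last q = hd p"
proof -
  define R where "R = P - {#p#}"
  have P: "P = add_mset p R" using p by (simp add: R_def)
  have "0 < (\<Sum>q\<in>#R. of_bool (hd p = last q) - of_bool (hd p = hd q) :: int)"
    using walk_decomposition_net_outdeg[OF dec, of "hd p"] p balanced
    by (simp add: P sum_mset_subtractf)
  then obtain q where "q \<in># R" "0 < (of_bool (hd p = last q) - of_bool (hd p = hd q) :: int)"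
    by (rule ex_pos_of_sum_mset_pos)
  then show thesis
    using that[of q "R - {#q#}"] by (auto simp: P add_mset_commute split: if_splits)
qed

text \<open>In a decomposition into the fewest walks, an open walk cannot end (start) at a balanced
  vertex: another walk would start (end) there, and the two could be concatenated.\<close>

lemma walk_decomposition_exists:
  obtains P where "walk_decomposition E P"
    "\<And>p. p \<in># P \<Longrightarrow> hd p \<noteq> last p \<Longrightarrow> net_outdeg E (hd p) \<noteq> 0 \<and> net_outdeg E (last p) \<noteq> 0"
proof -
  obtain P where dec: "walk_decomposition E P"
    and min: "\<And>Q. walk_decomposition E Q \<Longrightarrow> size P \<le> size Q"
    using ex_has_least_nat[of "walk_decomposition E" _ size] walk_decomposition_edges by blast
  have unlinked: "hd q \<noteq> last p" if "P = add_mset p (add_mset q R)" for p q R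
  proof
    assume "hd q = last p"
    then have "walk_decomposition E (add_mset (p @ tl q) R)"
      using dec that by (intro walk_decomposition_merge) simp_all
    from min[OF this] show False using that by simp
  qed
  have "net_outdeg E (hd p) \<noteq> 0 \<and> net_outdeg E (last p) \<noteq> 0" if p: "p \<in># P" "hd p \<noteq> last p" for p
  proof (intro conjI notI)
    assume "net_outdeg E (hd p) = 0"
    then obtain q R where "P = add_mset q (add_mset p R)" "last q = hd p"
      by (rule walk_decomposition_predecessor[OF dec p])
    then show False using unlinked[of q p R] by simp
  next
    assume "net_outdeg E (last p) = 0"
    then obtain q R where "P = add_mset p (add_mset q R)" "hd q = last p"
      by (rule walk_decomposition_successor[OF dec p])
    then show False using unlinked[of p q R] by simp
  qed
  with dec show thesis by (rule that)
qed

section \<open>Walks in the hypercube\<close>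

definition increment :: "('a \<Rightarrow> real) \<Rightarrow> 'a \<times> 'a \<Rightarrow> real" where
  "increment h e = h (snd e) - h (fst e)"

lemma sum_increment_steps:
  "p \<noteq> [] \<Longrightarrow> (\<Sum>e\<in>#steps p. increment h e) = h (last p) - h (hd p)"
  by (induction p rule: induct_list012) (auto simp: increment_def)

definition all_steps :: "'a list list \<Rightarrow> ('a \<times> 'a) multiset" where
  "all_steps P = sum_list (map steps P)"

lemma all_up_eq: "all_up P = filter_mset (\<lambda>(u, v). u \<subset> v) (all_steps P)"
  by (simp add: all_up_def all_steps_def up_edges_def[abs_def] filter_mset_sum_list comp_def)

lemma image_mset_sum_list: "image_mset f (sum_list Ms) = sum_list (map (image_mset f) Ms)"
  by (induction Ms) simp_all

lemma all_down_eq: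
  "all_down P = image_mset (\<lambda>(u, v). (v, u)) (filter_mset (\<lambda>(u, v). v \<subset> u) (all_steps P))"
  by (simp add: all_down_def all_steps_def down_edges_def[abs_def] filter_mset_sum_list
      image_mset_sum_list comp_def)

lemma path_value_eq: "path_value f p = f (last p) - f (hd p)"
  by (simp add: path_value_def)

lemma coll_value_eq_sum_increment:
  "(\<And>p. p \<in> set P \<Longrightarrow> p \<noteq> []) \<Longrightarrow> coll_value f P = (\<Sum>e\<in>#all_steps P. increment f e)"
  by (induction P) (simp_all add: coll_value_def all_steps_def path_value_eq sum_increment_steps)

definition cube_up_edge :: "nat \<Rightarrow> nat set \<times> nat set \<Rightarrow> bool" where
  "cube_up_edge n e \<longleftrightarrow> fst e \<subseteq> {..<n} \<and> (\<exists>i<n. i \<notin> fst e \<and> snd e = insert i (fst e))"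

lemma hc_adj_iff: "hc_adj n u v \<longleftrightarrow> cube_up_edge n (u, v) \<or> cube_up_edge n (v, u)"
  by (auto simp: hc_adj_def cube_up_edge_def)

lemma hc_adj_psubset: "hc_adj n u v \<Longrightarrow> u \<subset> v \<or> v \<subset> u"
  by (auto simp: hc_adj_def)

lemma cube_up_edge_psubset: "cube_up_edge n e \<Longrightarrow> fst e \<subset> snd e"
  by (auto simp: cube_up_edge_def)

lemma hc_adj_steps: "hc_walk n p \<Longrightarrow> e \<in># steps p \<Longrightarrow> hc_adj n (fst e) (snd e)"
  by (auto simp: steps_def hc_walk_def set_zip nth_tl)

lemma hc_adj_all_steps:
  "\<forall>p\<in>set P. hc_walk n p \<Longrightarrow> e \<in># all_steps P \<Longrightarrow> hc_adj n (fst e) (snd e)"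
  by (auto simp: all_steps_def intro: hc_adj_steps)

lemma cube_up_edge_all_up:
  assumes "\<forall>p\<in>set P. hc_walk n p" "e \<in># all_up P"
  shows "cube_up_edge n e"
  using assms hc_adj_all_steps[OF assms(1)]
  by (fastforce simp: all_up_eq hc_adj_iff dest: cube_up_edge_psubset)

lemma cube_up_edge_all_down:
  assumes "\<forall>p\<in>set P. hc_walk n p" "e \<in># all_down P"
  shows "cube_up_edge n e"
  using assms hc_adj_all_steps[OF assms(1)]
  by (fastforce simp: all_down_eq hc_adj_iff dest: cube_up_edge_psubset)

section \<open>Certificates rule out submodular extensions\<close>

lemma sum_increment_up_down:
  assumes "\<And>e. e \<in># F \<Longrightarrow> fst e \<subset> snd e \<or> snd e \<subset> fst e"
  shows "(\<Sum>e\<in>#F. increment h e) =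
    (\<Sum>e\<in>#filter_mset (\<lambda>(u, v). u \<subset> v) F. increment h e) -
    (\<Sum>e\<in>#image_mset (\<lambda>(u, v). (v, u)) (filter_mset (\<lambda>(u, v). v \<subset> u) F). increment h e)"
  using assms
proof (induction F)
  case (add e F)
  have "\<And>e'. e' \<in># F \<Longrightarrow> fst e' \<subset> snd e' \<or> snd e' \<subset> fst e'"
    using add.prems by simp
  note IH = add.IH[OF this]
  from add.prems have "fst e < snd e \<or> snd e < fst e" by simp
  then consider "fst e < snd e" "\<not> snd e < fst e" | "snd e < fst e" "\<not> fst e < snd e"
    using order.asym by blast
  then show ?case using IH by cases (cases e; simp add: increment_def)+
qed simp

lemma submodular_increment_mono:
  assumes sub: "submodular_on n g" and e: "cube_up_edge n e" and e': "cube_up_edge n e'"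
    and le: "edge_le e e'"
  shows "increment g e' \<le> increment g e"
proof -
  obtain i where i: "i \<notin> fst e" "snd e = insert i (fst e)"
    using e by (auto simp: cube_up_edge_def)
  obtain j where j: "j < n" "j \<notin> fst e'" "snd e' = insert j (fst e')" "fst e' \<subseteq> {..<n}"
    using e' by (auto simp: cube_up_edge_def)
  have "{i} = {j}" "fst e \<subseteq> fst e'"
    using le i j by (auto simp: edge_le_def)
  then show ?thesis
    using sub i j by (simp add: submodular_on_def increment_def)
qed

lemma matched_sum_increment_le:
  assumes sub: "submodular_on n g" and walks: "\<forall>p\<in>set P. hc_walk n p"
    and "matched P"
  shows "(\<Sum>e\<in>#all_down P. increment g e) \<le> (\<Sum>e\<in>#all_up P. increment g e)"
proof -
  obtain M where up: "image_mset fst M = all_up P" and down: "image_mset snd M = all_down P"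
    and le: "\<forall>x\<in>#M. edge_le (fst x) (snd x)"
    using \<open>matched P\<close> by (auto simp: matched_def)
  have "increment g (snd x) \<le> increment g (fst x)" if "x \<in># M" for x
  proof (rule submodular_increment_mono[OF sub])
    show "cube_up_edge n (fst x)"
      using cube_up_edge_all_up[OF walks] up that by (metis image_eqI set_image_mset)
    show "cube_up_edge n (snd x)"
      using cube_up_edge_all_down[OF walks] down that by (metis image_eqI set_image_mset)
  qed (use le that in blast)
  then show ?thesis
    unfolding up[symmetric] down[symmetric] image_mset.compositionality
    by (simp add: comp_def sum_mset_mono)
qed

lemma coll_value_nonneg_if_extendable:
  assumes sub: "submodular_on n g" and agree: "\<forall>S\<in>D. g S = f S"
    and adm: "\<And>p. p \<in> set P \<Longrightarrow> admissible_path n D p" and "matched P"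
  shows "0 \<le> coll_value f P"
proof -
  have walks: "\<forall>p\<in>set P. hc_walk n p"
    using adm by (simp add: admissible_path_def)
  then have nonempty: "\<And>p. p \<in> set P \<Longrightarrow> p \<noteq> []"
    by (simp add: hc_walk_def)
  have "path_value f p = path_value g p" if "p \<in> set P" for p
    using adm[OF that] agree by (auto simp: path_value_def admissible_path_def)
  then have "coll_value f P = coll_value g P"
    by (simp add: coll_value_def cong: map_cong)
  also have "\<dots> = (\<Sum>e\<in>#all_steps P. increment g e)"
    by (rule coll_value_eq_sum_increment[OF nonempty])
  also have "\<dots> = (\<Sum>e\<in>#all_up P. increment g e) - (\<Sum>e\<in>#all_down P. increment g e)"
    unfolding all_up_eq all_down_eq
    by (rule sum_increment_up_down)
      (use hc_adj_psubset hc_adj_all_steps[OF walks] in blast)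
  also have "\<dots> \<ge> 0"
    using matched_sum_increment_le[OF sub walks \<open>matched P\<close>] by simp
  finally show ?thesis .
qed

lemma not_extendable_if_path_certificate:
  "path_certificate n D f P \<Longrightarrow> \<not> submodular_extendable n D f"
  using coll_value_nonneg_if_extendable
  by (fastforce simp: path_certificate_def submodular_extendable_def)

section \<open>Certificates from matched edge multisets\<close>

definition matching_steps :: "(('a \<times> 'a) \<times> ('a \<times> 'a)) multiset \<Rightarrow> ('a \<times> 'a) multiset" where
  "matching_steps M = (\<Sum>x\<in>#M. {#fst x, prod.swap (snd x)#})"

lemma matching_steps_empty [simp]: "matching_steps {#} = {#}"
  by (simp add: matching_steps_def)

lemma matching_steps_add_mset [simp]:
  "matching_steps (add_mset x M) = add_mset (fst x) (add_mset (prod.swap (snd x)) (matching_steps M))"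
  by (simp add: matching_steps_def)

lemma matching_steps_sum_mset:
  "matching_steps (\<Sum>c\<in>#z. F c) = (\<Sum>c\<in>#z. matching_steps (F c))"
  by (induction z) (simp_all add: matching_steps_def)

lemma filter_up_matching_steps:
  assumes "\<forall>x\<in>#M. fst (fst x) \<subset> snd (fst x) \<and> fst (snd x) \<subset> snd (snd x)"
  shows "filter_mset (\<lambda>(u, v). u \<subset> v) (matching_steps M) = image_mset fst M"
  using assms by (induction M) (auto simp: prod.swap_def split: prod.splits dest: order.asym)

lemma filter_down_matching_steps:
  assumes "\<forall>x\<in>#M. fst (fst x) \<subset> snd (fst x) \<and> fst (snd x) \<subset> snd (snd x)"
  shows "image_mset (\<lambda>(u, v). (v, u)) (filter_mset (\<lambda>(u, v). v \<subset> u) (matching_steps M)) =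
    image_mset snd M"
  using assms by (induction M) (auto simp: prod.swap_def split: prod.splits dest: order.asym)

definition cube_matching :: "nat \<Rightarrow> ((nat set \<times> nat set) \<times> (nat set \<times> nat set)) multiset \<Rightarrow> bool" where
  "cube_matching n M \<longleftrightarrow>
     (\<forall>x\<in>#M. cube_up_edge n (fst x) \<and> cube_up_edge n (snd x) \<and> edge_le (fst x) (snd x))"

lemma matched_if_all_steps_eq:
  assumes "cube_matching n M" "all_steps P = matching_steps M"
  shows "matched P"
proof -
  have "\<forall>x\<in>#M. fst (fst x) \<subset> snd (fst x) \<and> fst (snd x) \<subset> snd (snd x)"
    using assms(1) by (auto simp: cube_matching_def dest: cube_up_edge_psubset)
  then show ?thesis
    using assms unfolding matched_def all_up_eq all_down_eq
    by (intro exI[of _ M]) (simp add: filter_up_matching_steps filter_down_matching_steps cube_matching_def)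
qed

lemma hc_adj_matching_steps:
  "cube_matching n M \<Longrightarrow> e \<in># matching_steps M \<Longrightarrow> hc_adj n (fst e) (snd e)"
  by (induction M) (auto simp: cube_matching_def hc_adj_iff prod.swap_def)

lemma nth_step_in_steps: "Suc k < length p \<Longrightarrow> (p ! k, p ! Suc k) \<in># steps p"
  by (simp add: steps_def set_zip) (rule exI[of _ k], simp add: nth_tl)

lemma hc_walk_of_steps:
  assumes "2 \<le> length p" and adj: "\<And>e. e \<in># steps p \<Longrightarrow> hc_adj n (fst e) (snd e)"
  shows "hc_walk n p"
proof -
  have step: "hc_adj n (p ! k) (p ! Suc k)" if "Suc k < length p" for k
    using adj[OF nth_step_in_steps[OF that]] by simp
  have vertex: "p ! k \<subseteq> {..<n}" if "k < length p" for k
  proof (cases "Suc k < length p")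
    case True
    then show ?thesis using step[of k] by (simp add: hc_adj_def)
  next
    case False
    then have "Suc (k - 1) < length p" "Suc (k - 1) = k" using that assms(1) by auto
    then show ?thesis using step[of "k - 1"] by (simp add: hc_adj_def)
  qed
  have "set p \<subseteq> Pow {..<n}"
    using vertex by (auto simp: set_conv_nth)
  then show ?thesis
    using assms(1) step by (auto simp: hc_walk_def)
qed

lemma path_certificate_of_matching:
  assumes M: "cube_matching n M"
    and balanced: "\<And>v. v \<notin> D \<Longrightarrow> net_outdeg (matching_steps M) v = 0"
    and negative: "(\<Sum>e\<in>#matching_steps M. increment f e) < 0"
  shows "\<exists>P. path_certificate n D f P"
proof -
  obtain Q where dec: "walk_decomposition (matching_steps M) Q"
    and ends: "\<And>p. p \<in># Q \<Longrightarrow> hd p \<noteq> last p \<Longrightarrow>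
      net_outdeg (matching_steps M) (hd p) \<noteq> 0 \<and> net_outdeg (matching_steps M) (last p) \<noteq> 0"
    using walk_decomposition_exists[of "matching_steps M"] by blast
  obtain P where P: "mset P = Q" using ex_mset by blast
  have steps_P: "all_steps P = matching_steps M"
    using dec P by (simp add: all_steps_def walk_decomposition_def flip: sum_mset_sum_list)
  have "admissible_path n D p" if "p \<in> set P" for p
  proof -
    have "p \<in># Q" using that P by auto
    then obtain Q' where Q': "Q = add_mset p Q'" by (blast dest: multi_member_split)
    then have "2 \<le> length p" "matching_steps M = steps p + (\<Sum>q\<in>#Q'. steps q)"
      using dec by (auto simp: walk_decomposition_def)
    then have "2 \<le> length p" "steps p \<subseteq># matching_steps M" by simp_all
    then have "hc_walk n p"
      using hc_adj_matching_steps[OF M] by (blast intro: hc_walk_of_steps mset_subset_eqD)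
    then show ?thesis
      using ends[OF \<open>p \<in># Q\<close>] balanced by (auto simp: admissible_path_def)
  qed
  moreover have "matched P"
    by (rule matched_if_all_steps_eq[OF M steps_P])
  moreover have "coll_value f P < 0"
    using coll_value_eq_sum_increment[of P f] negative steps_P calculation(1)
    by (simp add: admissible_path_def hc_walk_def)
  ultimately show ?thesis
    unfolding path_certificate_def by blast
qed

section \<open>The linear system of submodular extensions\<close>

datatype ext_constraint = Submod "nat set" "nat set" nat | Upper "nat set" | Lower "nat set"

definition ext_constraints :: "nat \<Rightarrow> nat set set \<Rightarrow> ext_constraint set" where
  "ext_constraints n D =
     {Submod S T i | S T i. S \<subseteq> T \<and> T \<subseteq> {..<n} \<and> i < n \<and> i \<notin> T} \<union> Upper ` D \<union> Lower ` D"

fun ext_lhs :: "ext_constraint \<Rightarrow> (nat set \<Rightarrow> real) \<Rightarrow> real" where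
  "ext_lhs (Submod S T i) x = x S + x (insert i T) - x (insert i S) - x T"
| "ext_lhs (Upper S) x = x S"
| "ext_lhs (Lower S) x = - x S"

fun ext_rhs :: "(nat set \<Rightarrow> real) \<Rightarrow> ext_constraint \<Rightarrow> real" where
  "ext_rhs f (Submod _ _ _) = 0"
| "ext_rhs f (Upper S) = f S"
| "ext_rhs f (Lower S) = - f S"

fun ext_coeff :: "ext_constraint \<Rightarrow> nat set \<Rightarrow> int" where
  "ext_coeff (Submod S T i) v =
     of_bool (v = S) + of_bool (v = insert i T) - of_bool (v = insert i S) - of_bool (v = T)"
| "ext_coeff (Upper S) v = of_bool (v = S)"
| "ext_coeff (Lower S) v = - of_bool (v = S)"

fun ext_pairs :: "ext_constraint \<Rightarrow> ((nat set \<times> nat set) \<times> (nat set \<times> nat set)) multiset" where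
  "ext_pairs (Submod S T i) = {#((S, insert i S), (T, insert i T))#}"
| "ext_pairs (Upper _) = {#}"
| "ext_pairs (Lower _) = {#}"

lemma sum_of_bool_eq_mult:
  "finite V \<Longrightarrow> a \<in> V \<Longrightarrow> (\<Sum>v\<in>V. of_bool (v = a) * x v) = (x a :: 'b :: semiring_1)"
  by (simp add: of_bool_def if_distrib[of "\<lambda>y. y * _"] sum.delta cong: if_cong)

lemma ext_constraints_cases:
  assumes "c \<in> ext_constraints n D"
  obtains S T i where "c = Submod S T i" "S \<subseteq> T" "T \<subseteq> {..<n}" "i < n" "i \<notin> T"
  | S where "c = Upper S" "S \<in> D"
  | S where "c = Lower S" "S \<in> D"
  using assms by (auto simp: ext_constraints_def)

lemma finite_ext_constraints: "finite D \<Longrightarrow> finite (ext_constraints n D)"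
proof -
  assume "finite D"
  have "{Submod S T i | S T i. S \<subseteq> T \<and> T \<subseteq> {..<n} \<and> i < n \<and> i \<notin> T}
      \<subseteq> (\<lambda>(S, T, i). Submod S T i) ` (Pow {..<n} \<times> Pow {..<n} \<times> {..<n})"
  proof clarify
    fix S T i assume "S \<subseteq> T" "T \<subseteq> {..<n}" "i < n"
    then show "Submod S T i \<in> (\<lambda>(S, T, i). Submod S T i) ` (Pow {..<n} \<times> Pow {..<n} \<times> {..<n})"
      by (intro image_eqI[of _ _ "(S, T, i)"]) auto
  qed
  then have "finite {Submod S T i | S T i. S \<subseteq> T \<and> T \<subseteq> {..<n} \<and> i < n \<and> i \<notin> T}"
    by (rule finite_subset) simp
  then show ?thesis
    using \<open>finite D\<close> by (simp add: ext_constraints_def)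
qed

lemma submodular_extendable_if_feasible:
  assumes "\<forall>c\<in>ext_constraints n D. ext_lhs c x \<le> ext_rhs f c"
  shows "submodular_extendable n D f"
  unfolding submodular_extendable_def submodular_on_def
proof (intro exI[of _ x] conjI allI impI ballI)
  fix S T i assume "S \<subseteq> T \<and> T \<subseteq> {..<n} \<and> i < n \<and> i \<notin> T"
  then have "Submod S T i \<in> ext_constraints n D" by (auto simp: ext_constraints_def)
  with assms have "ext_lhs (Submod S T i) x \<le> ext_rhs f (Submod S T i)" by blast
  then show "x (insert i T) - x T \<le> x (insert i S) - x S" by simp
next
  fix S assume "S \<in> D"
  then have "Upper S \<in> ext_constraints n D" "Lower S \<in> ext_constraints n D"
    by (auto simp: ext_constraints_def)
  with assms have "ext_lhs (Upper S) x \<le> ext_rhs f (Upper S)" "ext_lhs (Lower S) x \<le> ext_rhs f (Lower S)"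
    by blast+
  then show "x S = f S" by simp
qed

context
  fixes n :: nat and D :: "nat set set" and c :: ext_constraint
  assumes D: "D \<subseteq> Pow {..<n}" and c: "c \<in> ext_constraints n D"
begin

lemma ext_coeff_outside_cube: "v \<notin> Pow {..<n} \<Longrightarrow> ext_coeff c v = 0"
  using c D by (cases rule: ext_constraints_cases) auto

lemma sum_ext_coeff: "(\<Sum>v\<in>Pow {..<n}. of_int (ext_coeff c v) * x v) = ext_lhs c x"
  using c D
proof (cases rule: ext_constraints_cases)
  case (1 S T i)
  then have "S \<in> Pow {..<n}" "T \<in> Pow {..<n}" "insert i S \<in> Pow {..<n}" "insert i T \<in> Pow {..<n}"
    by auto
  moreover have "of_int (ext_coeff c v) * x v =
      of_bool (v = S) * x v + of_bool (v = insert i T) * x v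
      - of_bool (v = insert i S) * x v - of_bool (v = T) * x v" for v
    by (simp add: 1 algebra_simps)
  ultimately show ?thesis
    by (simp add: 1 sum.distrib sum_subtractf sum_of_bool_eq_mult)
next
  case (2 S)
  then show ?thesis using D by (auto simp: sum_of_bool_eq_mult)
next
  case (3 S)
  then show ?thesis using D by (auto simp: sum_of_bool_eq_mult sum_negf)
qed

lemma cube_matching_ext_pairs: "cube_matching n (ext_pairs c)"
  using c by (cases rule: ext_constraints_cases) (auto simp: cube_matching_def cube_up_edge_def edge_le_def)

lemma net_outdeg_ext_pairs: "v \<notin> D \<Longrightarrow> net_outdeg (matching_steps (ext_pairs c)) v = ext_coeff c v"
  using c by (cases rule: ext_constraints_cases) auto

lemma sum_increment_ext_pairs:
  "(\<Sum>e\<in>#matching_steps (ext_pairs c). increment h e) = ext_rhs h c - ext_lhs c h"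
  using c by (cases rule: ext_constraints_cases) (auto simp: increment_def)

end

section \<open>Infeasibility yields a certificate\<close>

lemma sum_mset_sum_mset_image: "(\<Sum>e\<in>#(\<Sum>c\<in>#z. F c). g e) = (\<Sum>c\<in>#z. \<Sum>e\<in>#F c. g e)"
  by (induction z) simp_all

lemma net_outdeg_ext_combination:
  assumes "D \<subseteq> Pow {..<n}" "set_mset z \<subseteq> ext_constraints n D" "v \<notin> D"
  shows "net_outdeg (matching_steps (\<Sum>c\<in>#z. ext_pairs c)) v = comb_coeff ext_coeff z v"
  using net_outdeg_ext_pairs[OF assms(1) _ assms(3)] assms(2)
  by (auto simp: matching_steps_sum_mset net_outdeg_sum_mset comb_coeff_def
      intro!: arg_cong[where f = sum_mset] image_mset_cong)

lemma sum_increment_ext_combination: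
  assumes D: "D \<subseteq> Pow {..<n}" and z: "set_mset z \<subseteq> ext_constraints n D"
    and cancel: "\<And>v. comb_coeff ext_coeff z v = 0"
  shows "(\<Sum>e\<in>#matching_steps (\<Sum>c\<in>#z. ext_pairs c). increment f e) = comb_rhs (ext_rhs f) z"
proof -
  have "(\<Sum>e\<in>#matching_steps (\<Sum>c\<in>#z. ext_pairs c). increment f e) =
      (\<Sum>c\<in>#z. ext_rhs f c - ext_lhs c f)"
    using sum_increment_ext_pairs[OF D] z
    by (auto simp: matching_steps_sum_mset sum_mset_sum_mset_image
        intro!: arg_cong[where f = sum_mset] image_mset_cong)
  also have "\<dots> = comb_rhs (ext_rhs f) z - comb_lhs ext_coeff (Pow {..<n}) z f"
    using sum_ext_coeff[OF D] z
    by (auto simp: sum_mset_subtractf comb_rhs_def comb_lhs_eq_sum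
        intro!: arg_cong[where f = sum_mset] image_mset_cong)
  also have "comb_lhs ext_coeff (Pow {..<n}) z f = 0"
    by (simp add: comb_lhs_def cancel)
  finally show ?thesis by simp
qed

lemma path_certificate_if_not_extendable:
  assumes D: "D \<subseteq> Pow {..<n}" and not_ext: "\<not> submodular_extendable n D f"
  shows "\<exists>P. path_certificate n D f P"
proof -
  have "\<not> (\<forall>c\<in>ext_constraints n D. ext_lhs c x \<le> ext_rhs f c)" for x
    using submodular_extendable_if_feasible not_ext by blast
  then have "\<nexists>x. \<forall>c\<in>ext_constraints n D. (\<Sum>v\<in>Pow {..<n}. of_int (ext_coeff c v) * x v) \<le> ext_rhs f c"
    using sum_ext_coeff[OF D] by simp
  then obtain z where z: "set_mset z \<subseteq> ext_constraints n D"
    and cancel: "\<And>v. comb_coeff ext_coeff z v = 0" and negative: "comb_rhs (ext_rhs f) z < 0"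
    using farkas_integer_combination[of "Pow {..<n}" "ext_constraints n D" ext_coeff]
      finite_ext_constraints[OF finite_subset[OF D]] ext_coeff_outside_cube[OF D]
    by blast
  show ?thesis
  proof (rule path_certificate_of_matching)
    show "cube_matching n (\<Sum>c\<in>#z. ext_pairs c)"
      using cube_matching_ext_pairs[OF D] z by (fastforce simp: cube_matching_def)
    show "net_outdeg (matching_steps (\<Sum>c\<in>#z. ext_pairs c)) v = 0" if "v \<notin> D" for v
      using net_outdeg_ext_combination[OF D z that] by (simp add: cancel)
    show "(\<Sum>e\<in>#matching_steps (\<Sum>c\<in>#z. ext_pairs c). increment f e) < 0"
      using sum_increment_ext_combination[OF D z cancel] negative by simp
  qed
qed

theorem lemma9:
  fixes n :: nat and D :: "nat set set" and f :: "nat set \<Rightarrow> real"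
  assumes "D \<subseteq> Pow {..<n}"
  shows "\<not> submodular_extendable n D f \<longleftrightarrow> (\<exists>P. path_certificate n D f P)"
  using path_certificate_if_not_extendable[OF assms] not_extendable_if_path_certificate by blast

end
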